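(* In the single-block Spice setting, fix $t>0$ and run iterations $k=0,1,\dots,t$ with a constant scaling factor $\rho=\rho(t)>0$, where for every $k=1,\dots,t$ $$\eta_k\ \ge\ \max\Big\{\eta_{k-1}\sqrt{\tfrac{\mathsf{R}(x^k)}{\mathsf{R}(x^{k-1})}},\ \ \eta_{k-1}\,\tfrac{\mathsf{R}(\bar x^k)\sqrt{\mathsf{R}(x^{k-1})}}{\mathsf{R}(\bar x^{k-1})\sqrt{\mathsf{R}(x^k)}}\Big\}.$$ Define $\bar x_t=\frac{1}{t+1}\sum_{k=0}^t\bar x^k$, $\eta_t^{\mathrm{avg}}=\frac{t+1}{\sum_{k=0}^t 1/\eta_k}$ and $\bar w_t=\frac{\sum_{k=0}^t\bar w^k/\eta_k}{\sum_{k=0}^t1/\eta_k}$. Then $\bar w_t\in\Omega$ and for every $w^*=(x^*,\lambda^* )\in\Omega$, $$f(\bar x_t)-f(x^* )+(\bar w_t-w^* )^\top\frac{1}{\eta_t^{\mathrm{avg}}\rho(t)}\Gamma(w^* )\ \le\ \frac{1}{2\eta_0\rho(t)(t+1)}\|w^*-w^0\|_{\mathsf{H}_0}^2,$$ where $\mathsf{H}_0=\begin{pmatrix}\sqrt{\mathsf{R}(x^0)}\,I_n&0\\0&\frac{\mu\mathsf{R}(\bar x^0)}{\sqrt{\mathsf{R}(x^0)}}I_p\end{pmatrix}$ (so that $H_0=\frac{1}{\eta_0}\mathsf{H}_0$).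
   Context: Single-block Spice setting. Let $\mathcal{X}\subseteq\mathbb{R}^n$ be nonempty closed convex, $f:\mathbb{R}^n\to\mathbb{R}$ convex, $\phi_1,\dots,\phi_p:\mathbb{R}^n\to\mathbb{R}$ convex and continuously differentiable, $\Phi(x)=(\phi_1(x),\dots,\phi_p(x))^\top$, $\mathcal{D}\Phi(x)\in\mathbb{R}^{p\times n}$ its Jacobian. Let $\mathcal{Z}=\mathbb{R}^p_+$, $\Omega=\mathcal{X}\times\mathcal{Z}$, $w=(x,\lambda)$, $\Gamma(w)=(\mathcal{D}\Phi(x)^\top\lambda,\,-\Phi(x))$. For a symmetric matrix $A$, $\|v\|_A^2:=v^\top A v$; the norm of a matrix is the spectral norm; $\mathsf{R}(x):=\|\mathcal{D}\Phi(x)\|^2$. The scaled Lagrangian is $\mathcal{L}(x,\lambda,\rho,\eta)=\rho f(x)+\frac1\eta\lambda^\top\Phi(x)$. Fix $\rho>0$, $\mu>1$, a starting point $w^0=(x^0,\lambda^0)\in\Omega$ and positive numbers $\eta_0,\eta_1,\dots$. Given $w^k=(x^k,\lambda^k)\in\Omega$, iteration $k$ is: $r_k=\frac{1}{\eta_k}\sqrt{\mathsf{R}(x^k)}$; $\bar x^k=\arg\min_{x\in\mathcal{X}}\{\mathcal{L}(x,\lambda^k,\rho,\eta_k)+\frac{r_k}{2}\|x-x^k\|^2\}$; $s_k=\frac{\mu\,\mathsf{R}(\bar x^k)}{\eta_k\sqrt{\mathsf{R}(x^k)}}$; $\bar\lambda^k=\arg\max_{\lambda\in\mathcal{Z}}\{\mathcal{L}(\bar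 x^k,\lambda,\rho,\eta_k)-\frac{s_k}{2}\|\lambda-\lambda^k\|^2\}$ (equivalently $\bar\lambda^k=\max\{\lambda^k+\frac{1}{\eta_k s_k}\Phi(\bar x^k),0\}$ componentwise); $\bar w^k=(\bar x^k,\bar\lambda^k)$; and $w^{k+1}=w^k-M_k(w^k-\bar w^k)$ where $M_k=\begin{pmatrix}I_n & -\frac{1}{\eta_k r_k}\mathcal{D}\Phi(\bar x^k)^\top\\ 0 & I_p\end{pmatrix}$. It is assumed throughout that $\mathsf{R}(x^k)>0$ and $\mathsf{R}(\bar x^k)>0$ for all $k$. Define $Q_k=\begin{pmatrix} r_kI_n & -\frac{1}{\eta_k}\mathcal{D}\Phi(\bar x^k)^\top\\ 0 & s_kI_p\end{pmatrix}$, $H_k=\begin{pmatrix} r_kI_n&0\\0&s_kI_p\end{pmatrix}$, $G_k=\begin{pmatrix} r_kI_n&0\\0&s_kI_p-\frac{1}{\eta_k^2r_k}\mathcal{D}\Phi(\bar x^k)\mathcal{D}\Phi(\bar x^k)^\top\end{pmatrix}$. *)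

theory Defs
  imports "HOL-Analysis.Analysis"
begin

definition spec_norm :: "real^'n^'m \<Rightarrow> real" where
  "spec_norm A = onorm (\<lambda>v. A *v v)"

text \<open>R(x) = ||D Phi(x)||^2, where DPhi x is the Jacobian (p x n matrix, rows = gradients).\<close>
definition Rfun :: "('a \<Rightarrow> real^'n^'m) \<Rightarrow> 'a \<Rightarrow> real" where
  "Rfun DPhi x = (spec_norm (DPhi x))\<^sup>2"

definition scaled_lagrangian ::
  "(real^'n \<Rightarrow> real) \<Rightarrow> (real^'n \<Rightarrow> real^'p) \<Rightarrow> real^'n \<Rightarrow> real^'p \<Rightarrow> real \<Rightarrow> real \<Rightarrow> real" where
  "scaled_lagrangian f Phi x lam rho eta = rho * f x + (1 / eta) * (lam \<bullet> Phi x)"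

definition Gamma ::
  "(real^'n \<Rightarrow> real^'p) \<Rightarrow> (real^'n \<Rightarrow> real^'n^'p) \<Rightarrow> (real^'n) \<times> (real^'p) \<Rightarrow> (real^'n) \<times> (real^'p)" where
  "Gamma Phi DPhi w = (transpose (DPhi (fst w)) *v snd w, - Phi (fst w))"

end

theory Submission
  imports Defs
begin

text \<open>
  For every comparison point \<open>w* = (x*, \<lambda>*)\<close> in \<open>\<Omega>\<close>, iteration \<open>k\<close> satisfies the one-step estimate
  \<open>\<rho> (f(xb\<^sub>k) - f(x*)) + (wb\<^sub>k - w*)\<^sup>T \<Gamma>(w*) / \<eta>\<^sub>k \<le> (|w* - w\<^sub>k|\<^sup>2 - |w* - w\<^sub>k\<^sub>+\<^sub>1|\<^sup>2) / 2\<close>,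
  both norms taken in the metric \<open>H\<^sub>k\<close>. It combines the first-order optimality of the two
  proximal subproblems with the gradient inequality for the convex constraints, which produces
  the monotone term \<open>\<Gamma>(w*)\<close>; the corrector moves \<open>x\<close> by \<open>D\<Phi>\<^sup>T (\<lambda>\<^sub>k - \<lambda>b\<^sub>k) / \<surd>R(x\<^sub>k)\<close>, and
  the \<open>r\<^sub>k\<close>-weighted square of this move is dominated by the \<open>s\<^sub>k\<close>-weighted square of the dual
  step because \<open>\<mu> > 1\<close>. The growth condition on \<open>\<eta>\<^sub>k\<close> makes \<open>r\<^sub>k\<close> and \<open>s\<^sub>k\<close> nonincreasing, so
  the right-hand sides telescope; Jensen's inequality for \<open>f\<close> and linearity of
  \<open>w \<mapsto> (w - w*)\<^sup>T \<Gamma>(w*)\<close> turn the sum into the ergodic bound.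
\<close>

lemma power2_norm_add:
  fixes a b :: "'a::real_inner"
  shows "(norm (a + b))\<^sup>2 = (norm a)\<^sup>2 + 2 * (a \<bullet> b) + (norm b)\<^sup>2"
  by (simp add: power2_norm_eq_inner inner_add_left inner_add_right inner_commute[of b a])

lemma power2_norm_diff:
  fixes a b :: "'a::real_inner"
  shows "(norm (a - b))\<^sup>2 = (norm a)\<^sup>2 - 2 * (a \<bullet> b) + (norm b)\<^sup>2"
  by (simp add: power2_norm_eq_inner inner_diff_left inner_diff_right inner_commute[of b a])

lemma has_derivative_imp_directional_quotient:
  fixes g :: "'a::real_normed_vector \<Rightarrow> real"
  assumes "(g has_derivative g') (at z)"
  shows "((\<lambda>s. (g (z + s *\<^sub>R d) - g z) / s) \<longlongrightarrow> g' d) (at_right 0)"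
proof -
  have "((\<lambda>s. z + s *\<^sub>R d) has_derivative (\<lambda>s. s *\<^sub>R d)) (at 0)"
    by (auto intro!: derivative_eq_intros)
  from diff_chain_at[OF this, of g g'] assms
  have "((\<lambda>s. g (z + s *\<^sub>R d)) has_derivative (\<lambda>s. g' (s *\<^sub>R d))) (at 0)"
    by (simp add: o_def)
  moreover have "(\<lambda>s. g' (s *\<^sub>R d)) = (*) (g' d)"
    using linear_scale[OF has_derivative_linear[OF assms]] by (auto simp: fun_eq_iff)
  ultimately have "((\<lambda>s. g (z + s *\<^sub>R d)) has_field_derivative g' d) (at 0)"
    by (simp add: has_field_derivative_def)
  then have "((\<lambda>s. (g (z + s *\<^sub>R d) - g z) / s) \<longlongrightarrow> g' d) (at 0)"
    by (simp add: has_field_derivative_iff)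
  then show ?thesis
    by (rule tendsto_mono[OF at_le, rotated]) simp
qed

lemma convex_on_has_derivative_above_tangent:
  fixes g :: "'a::real_normed_vector \<Rightarrow> real"
  assumes convex: "convex_on UNIV g" and deriv: "(g has_derivative g') (at z)"
  shows "g z + g' (y - z) \<le> g y"
proof -
  have bound: "\<forall>\<^sub>F s in at_right 0. (g (z + s *\<^sub>R (y - z)) - g z) / s \<le> g y - g z"
  proof (rule eventually_at_rightI[of 0 1])
    fix s :: real assume s: "s \<in> {0<..<1}"
    have "g (z + s *\<^sub>R (y - z)) = g ((1 - s) *\<^sub>R z + s *\<^sub>R y)"
      by (simp add: algebra_simps)
    also have "\<dots> \<le> (1 - s) * g z + s * g y"
      using convex_onD[OF convex, of s z y] s by simp
    finally have "g (z + s *\<^sub>R (y - z)) - g z \<le> s * (g y - g z)"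
      by (simp add: algebra_simps)
    then show "(g (z + s *\<^sub>R (y - z)) - g z) / s \<le> g y - g z"
      using s by (simp add: divide_le_eq mult.commute)
  qed simp
  have "g' (y - z) \<le> g y - g z"
    by (rule tendsto_upperbound[OF has_derivative_imp_directional_quotient[OF deriv] bound]) simp
  then show ?thesis by simp
qed

text \<open>No derivative of \<open>f\<close> is needed: along the segment towards \<open>y\<close>, convexity bounds
  the \<open>f\<close>-part of the difference quotient by \<open>f y - f xb\<close>.\<close>
lemma proximal_minimizer_optimality:
  fixes f q :: "'a::real_inner \<Rightarrow> real"
  assumes X: "convex X" "xb \<in> X" "y \<in> X" and f: "convex_on X f" and rho: "rho \<ge> 0"
    and q: "(q has_derivative q') (at xb)"
    and min: "\<forall>w\<in>X. rho * f xb + q xb + c * (norm (xb - z))\<^sup>2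
                     \<le> rho * f w + q w + c * (norm (w - z))\<^sup>2"
  shows "0 \<le> rho * (f y - f xb) + q' (y - xb) + 2 * c * ((xb - z) \<bullet> (y - xb))"
proof -
  define d where "d = y - xb"
  let ?Q = "\<lambda>s. rho * (f y - f xb) + (q (xb + s *\<^sub>R d) - q xb) / s
                 + 2 * c * ((xb - z) \<bullet> d) + c * s * (norm d)\<^sup>2"
  have "(?Q \<longlongrightarrow> rho * (f y - f xb) + q' d + 2 * c * ((xb - z) \<bullet> d) + c * 0 * (norm d)\<^sup>2)
      (at_right 0)"
    by (intro tendsto_intros has_derivative_imp_directional_quotient[OF q])
  moreover have "\<forall>\<^sub>F s in at_right 0. 0 \<le> ?Q s"
  proof (rule eventually_at_rightI[of 0 1])
    fix s :: real assume s: "s \<in> {0<..<1}"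
    have seg: "xb + s *\<^sub>R d = (1 - s) *\<^sub>R xb + s *\<^sub>R y"
      by (simp add: d_def algebra_simps)
    have "xb + s *\<^sub>R d \<in> X"
      unfolding seg using s X by (simp add: convex_def)
    with min have "rho * f xb + q xb + c * (norm (xb - z))\<^sup>2
        \<le> rho * f (xb + s *\<^sub>R d) + q (xb + s *\<^sub>R d) + c * (norm (xb + s *\<^sub>R d - z))\<^sup>2"
      by blast
    moreover have "rho * f (xb + s *\<^sub>R d) \<le> rho * ((1 - s) * f xb + s * f y)"
      unfolding seg using convex_onD[OF f, of s xb y] s X rho by (simp add: mult_left_mono)
    moreover have expand: "(norm (xb + s *\<^sub>R d - z))\<^sup>2
        = (norm (xb - z))\<^sup>2 + 2 * s * ((xb - z) \<bullet> d) + s\<^sup>2 * (norm d)\<^sup>2"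
      using power2_norm_add[of "xb - z" "s *\<^sub>R d"]
      by (simp add: power_mult_distrib algebra_simps)
    then have "c * (norm (xb + s *\<^sub>R d - z))\<^sup>2
        = c * (norm (xb - z))\<^sup>2 + s * (2 * c * ((xb - z) \<bullet> d)) + s * (c * s * (norm d)\<^sup>2)"
      unfolding expand by (simp add: algebra_simps power2_eq_square)
    ultimately have "0 \<le> s * (rho * (f y - f xb)) + (q (xb + s *\<^sub>R d) - q xb)
        + s * (2 * c * ((xb - z) \<bullet> d)) + s * (c * s * (norm d)\<^sup>2)"
      by (simp add: algebra_simps)
    also have "\<dots> = s * ?Q s"
      using s by (simp add: distrib_left)
    finally show "0 \<le> ?Q s"
      using s by (simp add: zero_le_mult_iff)
  qed simp
  ultimately have "0 \<le> rho * (f y - f xb) + q' d + 2 * c * ((xb - z) \<bullet> d) + c * 0 * (norm d)\<^sup>2"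
    by (rule tendsto_lowerbound) simp
  then show ?thesis by (simp add: d_def)
qed

lemma has_derivative_inner_components:
  fixes Phi :: "real^'n \<Rightarrow> real^'p"
  assumes "\<And>i. ((\<lambda>y. Phi y $ i) has_derivative (\<lambda>h. D $ i \<bullet> h)) (at z)"
  shows "((\<lambda>y. l \<bullet> Phi y) has_derivative (\<lambda>h. l \<bullet> (D *v h))) (at z)"
proof -
  have "((\<lambda>y. \<Sum>i\<in>UNIV. l $ i * Phi y $ i)
      has_derivative (\<lambda>h. \<Sum>i\<in>UNIV. l $ i * (D $ i \<bullet> h))) (at z)"
    using assms by (intro has_derivative_sum has_derivative_mult_right) auto
  then show ?thesis
    by (simp add: inner_vec_def matrix_vector_mult_def)
qed

lemma nonneg_inner_above_tangent:
  fixes Phi :: "real^'n \<Rightarrow> real^'p"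
  assumes convex: "\<And>i. convex_on UNIV (\<lambda>y. Phi y $ i)"
    and deriv: "\<And>i. ((\<lambda>y. Phi y $ i) has_derivative (\<lambda>h. D $ i \<bullet> h)) (at z)"
    and l: "\<And>i. l $ i \<ge> 0"
  shows "l \<bullet> Phi z + l \<bullet> (D *v (y - z)) \<le> l \<bullet> Phi y"
proof -
  have "l $ i * Phi z $ i + l $ i * (D $ i \<bullet> (y - z)) \<le> l $ i * Phi y $ i" for i
    using convex_on_has_derivative_above_tangent[OF convex deriv, of i y] l[of i]
    by (metis distrib_left mult_left_mono)
  then have "(\<Sum>i\<in>UNIV. l $ i * Phi z $ i + l $ i * (D $ i \<bullet> (y - z))) \<le> (\<Sum>i\<in>UNIV. l $ i * Phi y $ i)"
    by (rule sum_mono)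
  then show ?thesis
    by (simp add: inner_vec_def matrix_vector_mult_def sum.distrib)
qed

lemma orthant_projection_variational_inequality:
  fixes l m u v :: "real^'p"
  assumes a: "a > 0" and v: "\<And>i. v $ i \<ge> 0" and m: "m = (\<chi> i. max (l $ i + u $ i / a) 0)"
  shows "(v - m) \<bullet> u \<le> a * ((v - m) \<bullet> (m - l))"
proof -
  have "(v $ i - m $ i) * u $ i \<le> a * ((v $ i - m $ i) * (m $ i - l $ i))" for i
  proof (cases "l $ i + u $ i / a \<ge> 0")
    case True
    then have "a * (m $ i - l $ i) = u $ i" using a by (simp add: m)
    then show ?thesis by (metis mult.left_commute order_refl)
  next
    case False
    then have "a * l $ i + u $ i < 0"
      using a by (simp add: field_simps)
    then have "v $ i * (a * l $ i + u $ i) \<le> 0"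
      using v[of i] by (simp add: mult_nonneg_nonpos)
    with False show ?thesis by (simp add: m algebra_simps)
  qed
  then have "(\<Sum>i\<in>UNIV. (v $ i - m $ i) * u $ i) \<le> (\<Sum>i\<in>UNIV. a * ((v $ i - m $ i) * (m $ i - l $ i)))"
    by (rule sum_mono)
  then show ?thesis
    by (simp add: inner_vec_def sum_distrib_left)
qed

lemma norm_transpose_mult_le_spec_norm:
  fixes D :: "real^'n^'p"
  shows "norm (transpose D *v u) \<le> spec_norm D * norm u"
proof -
  let ?g = "transpose D *v u"
  have "norm ?g * norm ?g = ?g \<bullet> ?g"
    by (simp flip: power2_eq_square power2_norm_eq_inner)
  also have "\<dots> = u \<bullet> (D *v ?g)"
    by (simp add: dot_lmul_matrix)
  also have "\<dots> \<le> norm u * norm (D *v ?g)"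
    by (rule norm_cauchy_schwarz)
  also have "\<dots> \<le> norm u * (spec_norm D * norm ?g)"
    unfolding spec_norm_def
    by (rule mult_left_mono[OF onorm[OF matrix_vector_mul_bounded_linear]]) simp
  finally have "norm ?g * norm ?g \<le> (spec_norm D * norm u) * norm ?g"
    by (simp add: algebra_simps)
  then show ?thesis
    by (cases "?g = 0") (simp_all add: spec_norm_def onorm_pos_le[OF matrix_vector_mul_bounded_linear])
qed

lemma inner_Gamma:
  "((u, m) - (y, l)) \<bullet> Gamma Phi DPhi (y, l) = l \<bullet> (DPhi y *v (u - y)) - (m - l) \<bullet> Phi y"
  by (simp add: Gamma_def inner_prod_def inner_commute[of _ "l v* DPhi y"] dot_lmul_matrix)

lemma sum_le_telescoping:
  fixes a P Q :: "nat \<Rightarrow> real"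
  assumes step: "\<And>k. k \<le> t \<Longrightarrow> a k \<le> P k - Q k"
    and link: "\<And>k. k < t \<Longrightarrow> P (Suc k) \<le> Q k"
    and last: "Q t \<ge> 0"
  shows "(\<Sum>k\<le>t. a k) \<le> P 0"
proof -
  have "(\<Sum>k\<le>m. a k) \<le> P 0 - Q m" if "m \<le> t" for m
    using that
  proof (induction m)
    case 0
    then show ?case using step[of 0] by simp
  next
    case (Suc m)
    then show ?case using step[of "Suc m"] link[of m] by simp
  qed
  then show ?thesis using last by fastforce
qed

lemma convex_nonneg_orthant: "convex {l :: real^'p. \<forall>i. 0 \<le> l $ i}"
  by (rule convex_box_cart) (simp add: atLeast_def[symmetric])

lemma normalized_sum_in_convex:
  fixes y :: "'i \<Rightarrow> 'a::real_vector"
  assumes C: "convex C" and pos: "sum c I > 0"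
    and c: "\<And>i. i \<in> I \<Longrightarrow> c i \<ge> 0" and y: "\<And>i. i \<in> I \<Longrightarrow> y i \<in> C"
  shows "(1 / sum c I) *\<^sub>R (\<Sum>i\<in>I. c i *\<^sub>R y i) \<in> C"
proof -
  have "finite I" using pos sum.infinite by fastforce
  have "(1 / sum c I) *\<^sub>R (\<Sum>i\<in>I. c i *\<^sub>R y i) = (\<Sum>i\<in>I. (c i / sum c I) *\<^sub>R y i)"
    by (simp add: scaleR_sum_right)
  also have "\<dots> \<in> C"
    using \<open>finite I\<close> C pos c y
    by (intro convex_sum) (simp_all flip: sum_divide_distrib)
  finally show ?thesis .
qed

lemma inner_normalized_sum_diff:
  fixes y :: "'i \<Rightarrow> 'a::real_inner"
  assumes "sum c I \<noteq> 0"
  shows "((1 / sum c I) *\<^sub>R (\<Sum>i\<in>I. c i *\<^sub>R y i) - w) \<bullet> g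
       = (1 / sum c I) * (\<Sum>i\<in>I. c i * ((y i - w) \<bullet> g))"
proof -
  have "finite I" using assms sum.infinite by blast
  have "(\<Sum>i\<in>I. c i * ((y i - w) \<bullet> g)) = (\<Sum>i\<in>I. c i * (y i \<bullet> g)) - sum c I * (w \<bullet> g)"
    by (simp add: inner_diff_left right_diff_distrib sum_subtractf sum_distrib_right)
  then show ?thesis
    using assms by (simp add: inner_diff_left inner_sum_left field_simps)
qed

lemma convex_on_mean_le:
  fixes y :: "'i \<Rightarrow> 'a::real_vector"
  assumes "convex_on UNIV f" "finite I" "I \<noteq> {}"
  shows "f ((1 / card I) *\<^sub>R (\<Sum>i\<in>I. y i)) \<le> (1 / card I) * (\<Sum>i\<in>I. f (y i))"
proof -
  have "f (\<Sum>i\<in>I. (1 / card I) *\<^sub>R y i) \<le> (\<Sum>i\<in>I. (1 / card I) * f (y i))"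
    using assms by (intro convex_on_sum) auto
  then show ?thesis by (simp add: scaleR_sum_right sum_distrib_left)
qed

locale spice_iterates =
  fixes X :: "(real^'n) set"
    and f :: "real^'n \<Rightarrow> real"
    and Phi :: "real^'n \<Rightarrow> real^'p"
    and DPhi :: "real^'n \<Rightarrow> real^'n^'p"
    and rho mu :: real
    and eta :: "nat \<Rightarrow> real"
    and x xb :: "nat \<Rightarrow> real^'n"
    and lam lb :: "nat \<Rightarrow> real^'p"
    and t :: nat
  assumes X_convex: "convex X"
    and f_convex: "convex_on UNIV f"
    and Phi_convex: "\<forall>i. convex_on UNIV (\<lambda>y. Phi y $ i)"
    and Phi_deriv: "\<forall>z i. ((\<lambda>y. Phi y $ i) has_derivative (\<lambda>h. (DPhi z $ i) \<bullet> h)) (at z)"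
    and rho_pos: "rho > 0" and mu_gt: "mu > 1"
    and eta_pos: "\<forall>k. eta k > 0"
    and R_pos: "\<forall>k\<le>t. Rfun DPhi (x k) > 0 \<and> Rfun DPhi (xb k) > 0"
    and xb_step: "\<forall>k\<le>t. xb k \<in> X \<and>
        (\<forall>y\<in>X. scaled_lagrangian f Phi (xb k) (lam k) rho (eta k)
                  + (sqrt (Rfun DPhi (x k)) / eta k) / 2 * (norm (xb k - x k))\<^sup>2
               \<le> scaled_lagrangian f Phi y (lam k) rho (eta k)
                  + (sqrt (Rfun DPhi (x k)) / eta k) / 2 * (norm (y - x k))\<^sup>2)"
    and lb_step: "\<forall>k\<le>t. lb k = (\<chi> i. max (lam k $ i + Phi (xb k) $ i /
                 (eta k * (mu * Rfun DPhi (xb k) / (eta k * sqrt (Rfun DPhi (x k)))))) 0)"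
    and w_step: "\<forall>k\<le>t.
        x (Suc k) = x k - ((x k - xb k)
           - (1 / (eta k * (sqrt (Rfun DPhi (x k)) / eta k))) *\<^sub>R
               (transpose (DPhi (xb k)) *v (lam k - lb k)))
      \<and> lam (Suc k) = lam k - (lam k - lb k)"
    and eta_growth: "\<forall>k. 1 \<le> k \<and> k \<le> t \<longrightarrow>
        eta k \<ge> max (eta (k - 1) * sqrt (Rfun DPhi (x k) / Rfun DPhi (x (k - 1))))
                     (eta (k - 1) * (Rfun DPhi (xb k) * sqrt (Rfun DPhi (x (k - 1))))
                        / (Rfun DPhi (xb (k - 1)) * sqrt (Rfun DPhi (x k))))"
begin

definition r :: "nat \<Rightarrow> real" where
  "r k = sqrt (Rfun DPhi (x k)) / eta k"

definition s :: "nat \<Rightarrow> real" where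
  "s k = mu * Rfun DPhi (xb k) / (eta k * sqrt (Rfun DPhi (x k)))"

definition H_sqnorm :: "nat \<Rightarrow> real^'n \<Rightarrow> real^'p \<Rightarrow> real" where
  "H_sqnorm k u v = r k * (norm u)\<^sup>2 + s k * (norm v)\<^sup>2"

lemma sqrt_R_pos: "k \<le> t \<Longrightarrow> sqrt (Rfun DPhi (x k)) > 0"
  using R_pos by simp

lemma r_pos: "k \<le> t \<Longrightarrow> r k > 0"
  using sqrt_R_pos eta_pos by (simp add: r_def)

lemma s_pos: "k \<le> t \<Longrightarrow> s k > 0"
  using sqrt_R_pos eta_pos R_pos mu_gt by (simp add: s_def)

lemma H_sqnorm_nonneg: "k \<le> t \<Longrightarrow> H_sqnorm k u v \<ge> 0"
  using r_pos s_pos by (simp add: H_sqnorm_def less_imp_le)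

lemma lam_Suc: "k \<le> t \<Longrightarrow> lam (Suc k) = lb k"
  using w_step by simp

lemma x_Suc: "k \<le> t \<Longrightarrow>
    x (Suc k) = xb k + (1 / sqrt (Rfun DPhi (x k))) *\<^sub>R (transpose (DPhi (xb k)) *v (lam k - lb k))"
  using w_step eta_pos[rule_format, of k] by simp

lemma lb_nonneg: "k \<le> t \<Longrightarrow> lb k $ i \<ge> 0"
  using lb_step by simp

lemma primal_optimality:
  assumes k: "k \<le> t" and xs: "xs \<in> X"
  shows "0 \<le> rho * (f xs - f (xb k)) + 1 / eta k * (lam k \<bullet> (DPhi (xb k) *v (xs - xb k)))
           + r k * ((xb k - x k) \<bullet> (xs - xb k))"
proof -
  have deriv: "((\<lambda>y. 1 / eta k * (lam k \<bullet> Phi y))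
      has_derivative (\<lambda>h. 1 / eta k * (lam k \<bullet> (DPhi (xb k) *v h)))) (at (xb k))"
    using Phi_deriv by (intro has_derivative_mult_right has_derivative_inner_components) auto
  have min: "\<forall>y\<in>X. rho * f (xb k) + 1 / eta k * (lam k \<bullet> Phi (xb k)) + r k / 2 * (norm (xb k - x k))\<^sup>2
      \<le> rho * f y + 1 / eta k * (lam k \<bullet> Phi y) + r k / 2 * (norm (y - x k))\<^sup>2"
    using xb_step k by (simp add: scaled_lagrangian_def r_def)
  have "0 \<le> rho * (f xs - f (xb k)) + 1 / eta k * (lam k \<bullet> (DPhi (xb k) *v (xs - xb k)))
      + 2 * (r k / 2) * ((xb k - x k) \<bullet> (xs - xb k))"
    using xb_step k rho_pos convex_on_subset[OF f_convex subset_UNIV X_convex]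
    by (intro proximal_minimizer_optimality[OF X_convex _ xs _ _ deriv min]) simp_all
  then show ?thesis by simp
qed

lemma dual_optimality:
  assumes k: "k \<le> t" and ls: "\<And>i. ls $ i \<ge> 0"
  shows "1 / eta k * ((ls - lb k) \<bullet> Phi (xb k)) \<le> s k * ((ls - lb k) \<bullet> (lb k - lam k))"
proof -
  have "(ls - lb k) \<bullet> Phi (xb k) \<le> (eta k * s k) * ((ls - lb k) \<bullet> (lb k - lam k))"
    using k eta_pos[rule_format, of k] s_pos[OF k] lb_step mu_gt R_pos sqrt_R_pos[OF k]
    by (intro orthant_projection_variational_inequality ls) (simp_all add: s_def)
  then show ?thesis
    using eta_pos[rule_format, of k] by (simp add: pos_divide_le_eq mult_ac)
qed

text \<open>The extra term produced by the corrector step is absorbed by the dual metric; this is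
  where \<open>\<mu> > 1\<close> and \<open>\<parallel>D\<Phi>\<^sup>T\<parallel> = \<parallel>D\<Phi>\<parallel>\<close> enter.\<close>
lemma corrector_le:
  assumes k: "k \<le> t"
  shows "r k * (norm (x (Suc k) - xb k))\<^sup>2 \<le> s k * (norm (lam k - lb k))\<^sup>2"
proof -
  let ?q = "sqrt (Rfun DPhi (x k))" and ?g = "transpose (DPhi (xb k)) *v (lam k - lb k)"
  have q: "?q > 0" using sqrt_R_pos[OF k] .
  have "(norm ?g)\<^sup>2 \<le> (spec_norm (DPhi (xb k)) * norm (lam k - lb k))\<^sup>2"
    by (intro power_mono norm_transpose_mult_le_spec_norm) simp
  also have "\<dots> \<le> mu * (spec_norm (DPhi (xb k)) * norm (lam k - lb k))\<^sup>2"
    using mult_right_mono[of 1 mu "(spec_norm (DPhi (xb k)) * norm (lam k - lb k))\<^sup>2"] mu_gt by simp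
  finally have g: "(norm ?g)\<^sup>2 \<le> mu * Rfun DPhi (xb k) * (norm (lam k - lb k))\<^sup>2"
    by (simp add: Rfun_def power_mult_distrib)
  have "r k * (norm (x (Suc k) - xb k))\<^sup>2 = ?q / eta k * ((norm ?g)\<^sup>2 / ?q\<^sup>2)"
    using q by (simp add: x_Suc[OF k] r_def power_mult_distrib power_divide del: real_sqrt_pow2)
  also have "\<dots> = (norm ?g)\<^sup>2 / (eta k * ?q)"
    using q by (simp add: power2_eq_square del: real_sqrt_mult_self)
  also have "\<dots> \<le> mu * Rfun DPhi (xb k) * (norm (lam k - lb k))\<^sup>2 / (eta k * ?q)"
    using g eta_pos[rule_format, of k] q by (simp add: divide_right_mono)
  also have "\<dots> = s k * (norm (lam k - lb k))\<^sup>2"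
    by (simp add: s_def)
  finally show ?thesis .
qed

lemma Phi_inner_above_tangent:
  assumes "\<And>i. l $ i \<ge> 0"
  shows "l \<bullet> Phi z + l \<bullet> (DPhi z *v (y - z)) \<le> l \<bullet> Phi y"
  using Phi_convex Phi_deriv assms by (intro nonneg_inner_above_tangent) auto

lemma corrector_inner:
  assumes k: "k \<le> t"
  shows "r k * ((x (Suc k) - xb k) \<bullet> v) = 1 / eta k * ((lam k - lb k) \<bullet> (DPhi (xb k) *v v))"
  using sqrt_R_pos[OF k] by (simp add: x_Suc[OF k] r_def dot_lmul_matrix)

lemma gap_le:
  assumes k: "k \<le> t" and xs: "xs \<in> X" and ls: "\<And>i. ls $ i \<ge> 0"
  shows "rho * (f (xb k) - f xs) + 1 / eta k * (((xb k, lb k) - (xs, ls)) \<bullet> Gamma Phi DPhi (xs, ls))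
    \<le> r k * ((xb k - x k) \<bullet> (xs - xb k)) + r k * ((x (Suc k) - xb k) \<bullet> (xs - xb k))
      + s k * ((ls - lb k) \<bullet> (lb k - lam k))"
proof -
  define D where "D = DPhi (xb k)"
  define e where "e = 1 / eta k"
  have e: "e > 0" using eta_pos by (simp add: e_def)
  have primal: "0 \<le> rho * (f xs - f (xb k)) + e * (lam k \<bullet> (D *v (xs - xb k)))
      + r k * ((xb k - x k) \<bullet> (xs - xb k))"
    using primal_optimality[OF k xs] by (simp add: D_def e_def)
  have dual: "e * (ls \<bullet> Phi (xb k)) - e * (lb k \<bullet> Phi (xb k))
      \<le> s k * ((ls - lb k) \<bullet> (lb k - lam k))"
    using dual_optimality[OF k ls] by (simp add: e_def inner_diff_left right_diff_distrib)
  have "e * (lb k \<bullet> Phi (xb k) + lb k \<bullet> (D *v (xs - xb k))) \<le> e * (lb k \<bullet> Phi xs)"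
    unfolding D_def using e lb_nonneg[OF k] by (intro mult_left_mono Phi_inner_above_tangent) auto
  moreover have "e * (ls \<bullet> Phi xs + ls \<bullet> (DPhi xs *v (xb k - xs))) \<le> e * (ls \<bullet> Phi (xb k))"
    using e ls by (intro mult_left_mono Phi_inner_above_tangent) auto
  moreover have "r k * ((x (Suc k) - xb k) \<bullet> (xs - xb k))
      = e * (lam k \<bullet> (D *v (xs - xb k))) - e * (lb k \<bullet> (D *v (xs - xb k)))"
    unfolding corrector_inner[OF k] by (simp add: D_def e_def inner_diff_left right_diff_distrib)
  moreover have "e * (((xb k, lb k) - (xs, ls)) \<bullet> Gamma Phi DPhi (xs, ls))
      = e * (ls \<bullet> (DPhi xs *v (xb k - xs))) - e * (lb k \<bullet> Phi xs) + e * (ls \<bullet> Phi xs)"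
    unfolding inner_Gamma by (simp add: inner_diff_left algebra_simps)
  moreover have "rho * (f (xb k) - f xs) = - (rho * (f xs - f (xb k)))"
    by (simp add: right_diff_distrib)
  ultimately show ?thesis
    unfolding e_def[symmetric] distrib_left using primal dual by linarith
qed

lemma half_H_sqnorm_decrease:
  assumes k: "k \<le> t"
  shows "(H_sqnorm k (xs - x k) (ls - lam k) - H_sqnorm k (xs - x (Suc k)) (ls - lam (Suc k))) / 2
    = r k * ((xb k - x k) \<bullet> (xs - xb k)) + r k * ((x (Suc k) - xb k) \<bullet> (xs - xb k))
      + s k * ((ls - lb k) \<bullet> (lb k - lam k))
      + (r k * (norm (xb k - x k))\<^sup>2 + s k * (norm (lb k - lam k))\<^sup>2 - r k * (norm (x (Suc k) - xb k))\<^sup>2) / 2"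
proof -
  have n1: "(norm (xs - x k))\<^sup>2
      = (norm (xs - xb k))\<^sup>2 + 2 * ((xb k - x k) \<bullet> (xs - xb k)) + (norm (xb k - x k))\<^sup>2"
    using power2_norm_add[of "xs - xb k" "xb k - x k"] by (simp add: inner_commute)
  have n2: "(norm (xs - x (Suc k)))\<^sup>2
      = (norm (xs - xb k))\<^sup>2 - 2 * ((x (Suc k) - xb k) \<bullet> (xs - xb k)) + (norm (x (Suc k) - xb k))\<^sup>2"
    using power2_norm_diff[of "xs - xb k" "x (Suc k) - xb k"] by (simp add: inner_commute)
  have n3: "(norm (ls - lam k))\<^sup>2
      = (norm (ls - lb k))\<^sup>2 + 2 * ((ls - lb k) \<bullet> (lb k - lam k)) + (norm (lb k - lam k))\<^sup>2"
    using power2_norm_add[of "ls - lb k" "lb k - lam k"] by simp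
  show ?thesis
    unfolding H_sqnorm_def lam_Suc[OF k] n1 n2 n3 by (simp add: field_simps)
qed

lemma one_step:
  assumes k: "k \<le> t" and xs: "xs \<in> X" and ls: "\<And>i. ls $ i \<ge> 0"
  shows "rho * (f (xb k) - f xs) + 1 / eta k * (((xb k, lb k) - (xs, ls)) \<bullet> Gamma Phi DPhi (xs, ls))
    \<le> (H_sqnorm k (xs - x k) (ls - lam k) - H_sqnorm k (xs - x (Suc k)) (ls - lam (Suc k))) / 2"
proof -
  have "0 \<le> r k * (norm (xb k - x k))\<^sup>2"
    using r_pos[OF k] by simp
  moreover have "r k * (norm (x (Suc k) - xb k))\<^sup>2 \<le> s k * (norm (lb k - lam k))\<^sup>2"
    using corrector_le[OF k] by (simp add: norm_minus_commute)
  ultimately have "0 \<le> (r k * (norm (xb k - x k))\<^sup>2 + s k * (norm (lb k - lam k))\<^sup>2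
      - r k * (norm (x (Suc k) - xb k))\<^sup>2) / 2"
    by simp
  with gap_le[OF k xs ls] show ?thesis
    unfolding half_H_sqnorm_decrease[OF k] by (rule add_increasing2[rotated])
qed

lemma r_Suc_le:
  assumes k: "Suc k \<le> t"
  shows "r (Suc k) \<le> r k"
proof -
  let ?q = "\<lambda>k. sqrt (Rfun DPhi (x k))"
  have pos: "?q k > 0" "?q (Suc k) > 0" "eta k > 0" "eta (Suc k) > 0"
    using sqrt_R_pos eta_pos k by auto
  have "eta k * (?q (Suc k) / ?q k) \<le> eta (Suc k)"
    using eta_growth k by (auto simp: real_sqrt_divide)
  then have "eta k * ?q (Suc k) \<le> eta (Suc k) * ?q k"
    using pos by (simp add: pos_divide_le_eq)
  then show ?thesis
    using pos unfolding r_def by (simp add: divide_simps) (simp add: mult_ac)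
qed

lemma s_Suc_le:
  assumes k: "Suc k \<le> t"
  shows "s (Suc k) \<le> s k"
proof -
  let ?q = "\<lambda>k. sqrt (Rfun DPhi (x k))" and ?R = "\<lambda>k. Rfun DPhi (xb k)"
  have pos: "?q k > 0" "?q (Suc k) > 0" "?R k > 0" "?R (Suc k) > 0" "eta k > 0" "eta (Suc k) > 0"
    using sqrt_R_pos R_pos eta_pos k by auto
  have "eta k * (?R (Suc k) * ?q k) / (?R k * ?q (Suc k)) \<le> eta (Suc k)"
    using eta_growth k by auto
  then have "eta k * (?R (Suc k) * ?q k) \<le> eta (Suc k) * (?R k * ?q (Suc k))"
    using pos by (simp add: pos_divide_le_eq)
  then have "?R (Suc k) / (eta (Suc k) * ?q (Suc k)) \<le> ?R k / (eta k * ?q k)"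
    using pos by (simp add: divide_simps) (simp add: mult_ac)
  then show ?thesis
    using mu_gt unfolding s_def by (simp add: mult_left_mono flip: times_divide_eq_right)
qed

lemma H_sqnorm_Suc_le: "Suc k \<le> t \<Longrightarrow> H_sqnorm (Suc k) u v \<le> H_sqnorm k u v"
  unfolding H_sqnorm_def using r_Suc_le s_Suc_le by (intro add_mono mult_right_mono) auto

lemma sum_one_step_le:
  assumes xs: "xs \<in> X" and ls: "\<And>i. ls $ i \<ge> 0"
  shows "(\<Sum>k\<le>t. rho * (f (xb k) - f xs) + 1 / eta k * (((xb k, lb k) - (xs, ls)) \<bullet> Gamma Phi DPhi (xs, ls)))
    \<le> H_sqnorm 0 (xs - x 0) (ls - lam 0) / 2"
proof (rule sum_le_telescoping)
  show "rho * (f (xb k) - f xs) + 1 / eta k * (((xb k, lb k) - (xs, ls)) \<bullet> Gamma Phi DPhi (xs, ls))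
      \<le> H_sqnorm k (xs - x k) (ls - lam k) / 2 - H_sqnorm k (xs - x (Suc k)) (ls - lam (Suc k)) / 2"
    if "k \<le> t" for k
    using one_step[OF that xs ls] by (simp add: diff_divide_distrib)
  show "H_sqnorm (Suc k) (xs - x (Suc k)) (ls - lam (Suc k)) / 2
      \<le> H_sqnorm k (xs - x (Suc k)) (ls - lam (Suc k)) / 2"
    if "k < t" for k
    using H_sqnorm_Suc_le that by simp
  show "0 \<le> H_sqnorm t (xs - x (Suc t)) (ls - lam (Suc t)) / 2"
    using H_sqnorm_nonneg by simp
qed

lemma H_sqnorm_0:
  "H_sqnorm 0 u v = (sqrt (Rfun DPhi (x 0)) * (norm u)\<^sup>2
     + mu * Rfun DPhi (xb 0) / sqrt (Rfun DPhi (x 0)) * (norm v)\<^sup>2) / eta 0"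
  by (simp add: H_sqnorm_def r_def s_def add_divide_distrib)

lemma weighted_average_feasible:
  "(1 / (\<Sum>k\<le>t. 1 / eta k)) *\<^sub>R (\<Sum>k\<le>t. (1 / eta k) *\<^sub>R (xb k, lb k))
     \<in> X \<times> {l. \<forall>i. 0 \<le> l $ i}"
proof (rule normalized_sum_in_convex)
  show "(\<Sum>k\<le>t. 1 / eta k) > 0"
    using eta_pos by (intro sum_pos) auto
qed (use X_convex eta_pos xb_step lb_nonneg in \<open>auto intro: convex_Times convex_nonneg_orthant less_imp_le\<close>)

lemma weighted_average_gap:
  "((1 / (\<Sum>k\<le>t. 1 / eta k)) *\<^sub>R (\<Sum>k\<le>t. (1 / eta k) *\<^sub>R (xb k, lb k)) - w)
     \<bullet> ((1 / ((real t + 1) / (\<Sum>k\<le>t. 1 / eta k) * rho)) *\<^sub>R g)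
   = (\<Sum>k\<le>t. 1 / eta k * (((xb k, lb k) - w) \<bullet> g)) / ((real t + 1) * rho)"
proof -
  define S where "S = (\<Sum>k\<le>t. 1 / eta k)"
  have S: "S \<noteq> 0"
    unfolding S_def using eta_pos by (intro less_imp_neq[symmetric] sum_pos) auto
  have "((1 / S) *\<^sub>R (\<Sum>k\<le>t. (1 / eta k) *\<^sub>R (xb k, lb k)) - w) \<bullet> g
      = 1 / S * (\<Sum>k\<le>t. 1 / eta k * (((xb k, lb k) - w) \<bullet> g))"
    using S unfolding S_def by (rule inner_normalized_sum_diff)
  moreover have "1 / (T / S * rho) * (1 / S * G) = G / (T * rho)" if "T > 0" for T G
    using S that rho_pos by (simp add: field_simps)
  ultimately show ?thesis
    unfolding S_def[symmetric] inner_scaleR_right by simp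
qed

lemma ergodic_bound:
  assumes xs: "xs \<in> X" and ls: "\<And>i. ls $ i \<ge> 0"
  shows "f ((1 / (real t + 1)) *\<^sub>R (\<Sum>k\<le>t. xb k)) - f xs
      + (\<Sum>k\<le>t. 1 / eta k * (((xb k, lb k) - (xs, ls)) \<bullet> Gamma Phi DPhi (xs, ls))) / ((real t + 1) * rho)
    \<le> 1 / (2 * eta 0 * rho * (real t + 1)) *
       (sqrt (Rfun DPhi (x 0)) * (norm (xs - x 0))\<^sup>2
        + mu * Rfun DPhi (xb 0) / sqrt (Rfun DPhi (x 0)) * (norm (ls - lam 0))\<^sup>2)"
proof -
  let ?g = "\<lambda>k. 1 / eta k * (((xb k, lb k) - (xs, ls)) \<bullet> Gamma Phi DPhi (xs, ls))"
  have jensen: "f ((1 / (real t + 1)) *\<^sub>R (\<Sum>k\<le>t. xb k)) \<le> (\<Sum>k\<le>t. f (xb k)) / (real t + 1)"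
    using convex_on_mean_le[OF f_convex, of "{..t}" xb] by (simp add: add.commute)
  have "(\<Sum>k\<le>t. rho * (f (xb k) - f xs) + ?g k)
      = rho * (\<Sum>k\<le>t. f (xb k)) - (real t + 1) * rho * f xs + (\<Sum>k\<le>t. ?g k)"
    by (simp add: sum.distrib sum_subtractf sum_distrib_left algebra_simps)
  then have sum_le: "rho * (\<Sum>k\<le>t. f (xb k)) - (real t + 1) * rho * f xs + (\<Sum>k\<le>t. ?g k)
      \<le> H_sqnorm 0 (xs - x 0) (ls - lam 0) / 2"
    using sum_one_step_le[OF xs ls] by simp
  have "F / T - f xs + G / (T * rho) = (rho * F - T * rho * f xs + G) / (T * rho)" if "T > 0" for F G T
    using that rho_pos by (simp add: field_simps)
  then have "(\<Sum>k\<le>t. f (xb k)) / (real t + 1) - f xs + (\<Sum>k\<le>t. ?g k) / ((real t + 1) * rho)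
      = (rho * (\<Sum>k\<le>t. f (xb k)) - (real t + 1) * rho * f xs + (\<Sum>k\<le>t. ?g k)) / ((real t + 1) * rho)"
    by simp
  also have "\<dots> \<le> H_sqnorm 0 (xs - x 0) (ls - lam 0) / 2 / ((real t + 1) * rho)"
    using rho_pos by (intro divide_right_mono[OF sum_le]) simp
  also have "\<dots> = 1 / (2 * eta 0 * rho * (real t + 1)) *
       (sqrt (Rfun DPhi (x 0)) * (norm (xs - x 0))\<^sup>2
        + mu * Rfun DPhi (xb 0) / sqrt (Rfun DPhi (x 0)) * (norm (ls - lam 0))\<^sup>2)"
    by (simp add: H_sqnorm_0 field_simps)
  finally show ?thesis
    using jensen by linarith
qed

end

theorem theorem3p3:
  fixes X :: "(real^'n) set"
    and f :: "real^'n \<Rightarrow> real"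
    and Phi :: "real^'n \<Rightarrow> real^'p"
    and DPhi :: "real^'n \<Rightarrow> real^'n^'p"
    and rho mu :: real
    and eta :: "nat \<Rightarrow> real"
    and x xb :: "nat \<Rightarrow> real^'n"
    and lam lb :: "nat \<Rightarrow> real^'p"
    and t :: nat
  assumes X_ne: "X \<noteq> {}" and X_closed: "closed X" and X_convex: "convex X"
    and f_convex: "convex_on UNIV f"
    and Phi_convex: "\<forall>i. convex_on UNIV (\<lambda>y. Phi y $ i)"
    and Phi_deriv: "\<forall>z i. ((\<lambda>y. Phi y $ i) has_derivative (\<lambda>h. (DPhi z $ i) \<bullet> h)) (at z)"
    and DPhi_cont: "continuous_on UNIV DPhi"
    and rho_pos: "rho > 0" and mu_gt: "mu > 1" and t_pos: "t > 0"
    and start: "x 0 \<in> X" "\<forall>i. lam 0 $ i \<ge> 0"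
    and eta_pos: "\<forall>k. eta k > 0"
    and R_pos: "\<forall>k\<le>t. Rfun DPhi (x k) > 0 \<and> Rfun DPhi (xb k) > 0"
    and xb_step: "\<forall>k\<le>t. xb k \<in> X \<and>
        (\<forall>y\<in>X. scaled_lagrangian f Phi (xb k) (lam k) rho (eta k)
                  + (sqrt (Rfun DPhi (x k)) / eta k) / 2 * (norm (xb k - x k))\<^sup>2
               \<le> scaled_lagrangian f Phi y (lam k) rho (eta k)
                  + (sqrt (Rfun DPhi (x k)) / eta k) / 2 * (norm (y - x k))\<^sup>2)"
    and lb_step: "\<forall>k\<le>t. lb k = (\<chi> i. max (lam k $ i + Phi (xb k) $ i /
                 (eta k * (mu * Rfun DPhi (xb k) / (eta k * sqrt (Rfun DPhi (x k)))))) 0)"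
    and w_step: "\<forall>k\<le>t.
        x (Suc k) = x k - ((x k - xb k)
           - (1 / (eta k * (sqrt (Rfun DPhi (x k)) / eta k))) *\<^sub>R
               (transpose (DPhi (xb k)) *v (lam k - lb k)))
      \<and> lam (Suc k) = lam k - (lam k - lb k)"
    and eta_growth: "\<forall>k. 1 \<le> k \<and> k \<le> t \<longrightarrow>
        eta k \<ge> max (eta (k - 1) * sqrt (Rfun DPhi (x k) / Rfun DPhi (x (k - 1))))
                     (eta (k - 1) * (Rfun DPhi (xb k) * sqrt (Rfun DPhi (x (k - 1))))
                        / (Rfun DPhi (xb (k - 1)) * sqrt (Rfun DPhi (x k))))"
  shows "let S = (\<Sum>k\<le>t. 1 / eta k);
             wbar = (1 / S) *\<^sub>R (\<Sum>k\<le>t. (1 / eta k) *\<^sub>R (xb k, lb k));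
             xavg = (1 / (real t + 1)) *\<^sub>R (\<Sum>k\<le>t. xb k);
             eta_avg = (real t + 1) / S
         in fst wbar \<in> X \<and> (\<forall>i. snd wbar $ i \<ge> 0) \<and>
            (\<forall>xs ls. xs \<in> X \<longrightarrow> (\<forall>i. ls $ i \<ge> 0) \<longrightarrow>
               f xavg - f xs + (wbar - (xs, ls)) \<bullet> ((1 / (eta_avg * rho)) *\<^sub>R Gamma Phi DPhi (xs, ls))
               \<le> 1 / (2 * eta 0 * rho * (real t + 1)) *
                  (sqrt (Rfun DPhi (x 0)) * (norm (xs - x 0))\<^sup>2
                   + mu * Rfun DPhi (xb 0) / sqrt (Rfun DPhi (x 0)) * (norm (ls - lam 0))\<^sup>2))"
proof -
  \<comment> \<open>\<open>X_ne\<close>, \<open>X_closed\<close>, \<open>DPhi_cont\<close>, \<open>t_pos\<close> and \<open>start\<close> only guarantee that the iterates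
    exist; the estimate itself is derived from the recorded iterates alone.\<close>
  interpret spice_iterates X f Phi DPhi rho mu eta x xb lam lb t
    using X_convex f_convex Phi_convex Phi_deriv rho_pos mu_gt eta_pos R_pos xb_step lb_step w_step
      eta_growth
    by unfold_locales
  let ?w = "(1 / (\<Sum>k\<le>t. 1 / eta k)) *\<^sub>R (\<Sum>k\<le>t. (1 / eta k) *\<^sub>R (xb k, lb k))"
  have "fst ?w \<in> X \<and> (\<forall>i. snd ?w $ i \<ge> 0)"
    using weighted_average_feasible unfolding mem_Times_iff mem_Collect_eq .
  then show ?thesis
    unfolding Let_def weighted_average_gap using ergodic_bound by blast
qed

end
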